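(* Let $U\subset\mathbb R^m$ be compact, let $f:U\to\mathbb R$, and define $f^*(t)=\max_{u\in U}\{\langle u,t\rangle-f(u)\}$. Let $\mathcal X=\mathcal X_1\times\cdots\times\mathcal X_n$ be a block-structured parameter set and let $E(\bm\theta)=(E_1(\bm\theta),\dots,E_m(\bm\theta))$ with $E_j:\mathcal X\to\mathbb R$. Suppose that for each $j\in\{1,\dots,m\}$ and each block $i\in\{1,\dots,n\}$ there are functions $a_{ij},b_{ij}$ with $E_j(\bm\theta)=a_{ij}(\theta_i;\bar{\bm\theta}_i)-b_{ij}(\theta_i;\bar{\bm\theta}_i)$ for all $\bm\theta$, where $a_{ij}(\cdot;\bar{\bm\theta}_i)$ and $b_{ij}(\cdot;\bar{\bm\theta}_i)$ are convex in $\theta_i$ for each fixed $\bar{\bm\theta}_i$. For $j=1,\dots,m$ let $\underline u_j=\min_{u\in U}u_j$, $\bar u_j=\max_{u\in U}u_j$, $c_j^+=\max\{-\underline u_j,0\}$, $d_j^+=\max\{\bar u_j,0\}$, and let $c^+,d^+\in\mathbb R^m$ be the vectors with these components. Write $a_i=(a_{i1},\dots,a_{im})$, $b_i=(b_{i1},\dots,b_{im})$, and define $h_i(\theta_i;\bar{\bm\theta}_i)=\langle c^+,a_i(\theta_i;\bar{\bm\theta}_i)\rangle+\langle d^+,b_i(\theta_i;\bar{\bm\theta}_i)\rangle$, $g_i(\theta_i;\bar{\bm\theta}_i)=f^*(E(\bm\theta))+h_i(\theta_i;\bar{\bm\theta}_i)$. Then for every $i$, $f^*(E(\bm\theta))=g_i(\theta_i;\bar{\bm\theta}_i)-h_i(\theta_i;\bar{\bm\theta}_i)$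 with $g_i(\cdot;\bar{\bm\theta}_i)$ and $h_i(\cdot;\bar{\bm\theta}_i)$ convex in $\theta_i$ for every fixed $\bar{\bm\theta}_i$; in particular $f^*\circ E$ is BDC.
   Context: Block notation: for $\bm\theta\in\mathcal X$, $\theta_i$ is its $i$th block and $\bar{\bm\theta}_i$ is the vector obtained from $\bm\theta$ by setting the $i$th block to zero. A function is BDC if for every block $i$ it can be written as $g_i(\theta_i;\bar{\bm\theta}_i)-h_i(\theta_i;\bar{\bm\theta}_i)$ with both functions convex in $\theta_i$ for each fixed $\bar{\bm\theta}_i$. *)

theory Defs
  imports "HOL-Analysis.Analysis"
begin

text \<open>Convex conjugate of f restricted to U (the maximum, when attained, equals this supremum).\<close>
definition conjU :: "(real^'m \<Rightarrow> real) \<Rightarrow> (real^'m) set \<Rightarrow> real^'m \<Rightarrow> real" where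
  "conjU f U t = (SUP u\<in>U. inner u t - f u)"

definition lowU :: "(real^'m) set \<Rightarrow> 'm \<Rightarrow> real" where
  "lowU U j = (INF u\<in>U. u $ j)"

definition upU :: "(real^'m) set \<Rightarrow> 'm \<Rightarrow> real" where
  "upU U j = (SUP u\<in>U. u $ j)"

definition cplus :: "(real^'m) set \<Rightarrow> real^'m" where
  "cplus U = (\<chi> j. max (- lowU U j) 0)"

definition dplus :: "(real^'m) set \<Rightarrow> real^'m" where
  "dplus U = (\<chi> j. max (upU U j) 0)"

text \<open>Block-structured parameter set X_1 x ... x X_n: blocks indexed 0..n-1,
  unused indices fixed to 0.\<close>
definition paramset :: "nat \<Rightarrow> (nat \<Rightarrow> 'a::real_vector set) \<Rightarrow> (nat \<Rightarrow> 'a) set" where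
  "paramset n X = {\<theta>. (\<forall>i<n. \<theta> i \<in> X i) \<and> (\<forall>i\<ge>n. \<theta> i = 0)}"

text \<open>Block difference-of-convex (BDC); the second argument of g, h is \<theta> with block i set to 0.\<close>
definition BDC :: "nat \<Rightarrow> (nat \<Rightarrow> 'a::real_vector set) \<Rightarrow> ((nat \<Rightarrow> 'a) \<Rightarrow> real) \<Rightarrow> bool" where
  "BDC n X F \<longleftrightarrow> (\<forall>i<n. \<exists>g h :: 'a \<Rightarrow> (nat \<Rightarrow> 'a) \<Rightarrow> real.
     (\<forall>\<theta>\<in>paramset n X. F \<theta> = g (\<theta> i) (\<theta>(i := 0)) - h (\<theta> i) (\<theta>(i := 0))) \<and>
     (\<forall>\<theta>\<in>paramset n X. convex_on (X i) (\<lambda>x. g x (\<theta>(i := 0))) \<and>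
                          convex_on (X i) (\<lambda>x. h x (\<theta>(i := 0)))))"

definition hfun :: "(real^'m) set \<Rightarrow> (nat \<Rightarrow> 'm \<Rightarrow> 'a \<Rightarrow> (nat \<Rightarrow> 'a) \<Rightarrow> real)
    \<Rightarrow> (nat \<Rightarrow> 'm \<Rightarrow> 'a \<Rightarrow> (nat \<Rightarrow> 'a) \<Rightarrow> real) \<Rightarrow> nat \<Rightarrow> 'a \<Rightarrow> (nat \<Rightarrow> 'a) \<Rightarrow> real" where
  "hfun U a b i x \<theta>b = inner (cplus U) (\<chi> j. a i j x \<theta>b) + inner (dplus U) (\<chi> j. b i j x \<theta>b)"

definition gfun :: "(real^'m \<Rightarrow> real) \<Rightarrow> (real^'m) set \<Rightarrow> ((nat \<Rightarrow> 'a) \<Rightarrow> real^'m)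
    \<Rightarrow> (nat \<Rightarrow> 'm \<Rightarrow> 'a \<Rightarrow> (nat \<Rightarrow> 'a) \<Rightarrow> real)
    \<Rightarrow> (nat \<Rightarrow> 'm \<Rightarrow> 'a \<Rightarrow> (nat \<Rightarrow> 'a) \<Rightarrow> real) \<Rightarrow> nat \<Rightarrow> 'a \<Rightarrow> (nat \<Rightarrow> 'a) \<Rightarrow> real" where
  "gfun f U E a b i x \<theta>b = conjU f U (E (\<theta>b(i := x))) + hfun U a b i x \<theta>b"

end

theory Submission
  imports Defs
begin

text \<open>For \<open>u \<in> U\<close> the bounds \<open>-c\<^sup>+ \<le> u \<le> d\<^sup>+\<close> hold componentwise, so
  \<open>\<langle>u, a - b\<rangle> + \<langle>c\<^sup>+, a\<rangle> + \<langle>d\<^sup>+, b\<rangle> = \<langle>u + c\<^sup>+, a\<rangle> + \<langle>d\<^sup>+ - u, b\<rangle>\<close> is a nonnegative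
  combination of the convex functions \<open>a\<^sub>i\<^sub>j\<close>, \<open>b\<^sub>i\<^sub>j\<close> of \<open>\<theta>\<^sub>i\<close>. Hence \<open>g\<^sub>i\<close> is a pointwise
  supremum over \<open>U\<close> of convex functions of \<open>\<theta>\<^sub>i\<close>, and therefore convex.\<close>

lemma convex_on_cong:
  assumes "\<And>x. x \<in> S \<Longrightarrow> f x = g x"
  shows "convex_on S f \<longleftrightarrow> convex_on S g"
  using assms unfolding convex_on_def convex_def by auto

lemma convex_on_sum_fun:
  assumes "finite J" "convex S" "\<And>j. j \<in> J \<Longrightarrow> convex_on S (F j)"
  shows "convex_on S (\<lambda>x. \<Sum>j\<in>J. F j x)"
  using assms
proof (induction J rule: finite_induct)
  case empty
  then show ?case by (simp add: convex_on_const)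
next
  case (insert j J)
  then show ?case by (simp add: convex_on_add)
qed

lemma convex_on_inner_nonneg:
  fixes A :: "'a::real_vector \<Rightarrow> real^'m"
  assumes "\<And>j. 0 \<le> w $ j" and "\<And>j. convex_on S (\<lambda>x. A x $ j)"
  shows "convex_on S (\<lambda>x. inner w (A x))"
  unfolding inner_vec_def inner_real_def
  using assms by (intro convex_on_sum_fun convex_on_cmul) (auto intro: convex_on_imp_convex)

lemma convex_on_SUP:
  assumes "U \<noteq> {}" and convex: "\<And>u. u \<in> U \<Longrightarrow> convex_on S (\<phi> u)"
    and bdd: "\<And>x. x \<in> S \<Longrightarrow> bdd_above ((\<lambda>u. \<phi> u x) ` U)"
  shows "convex_on S (\<lambda>x. SUP u\<in>U. \<phi> u x)"
  unfolding convex_on_def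
proof (intro conjI ballI allI impI)
  show "convex S"
    using \<open>U \<noteq> {}\<close> convex convex_on_imp_convex by blast
  fix x y assume xy: "x \<in> S" "y \<in> S"
  fix s t :: real assume st: "0 \<le> s" "0 \<le> t" "s + t = 1"
  show "(SUP u\<in>U. \<phi> u (s *\<^sub>R x + t *\<^sub>R y)) \<le> s * (SUP u\<in>U. \<phi> u x) + t * (SUP u\<in>U. \<phi> u y)"
  proof (rule cSUP_least[OF \<open>U \<noteq> {}\<close>])
    fix u assume "u \<in> U"
    have "\<phi> u (s *\<^sub>R x + t *\<^sub>R y) \<le> s * \<phi> u x + t * \<phi> u y"
      using convex[OF \<open>u \<in> U\<close>] xy st unfolding convex_on_def by blast
    also have "\<dots> \<le> s * (SUP u\<in>U. \<phi> u x) + t * (SUP u\<in>U. \<phi> u y)"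
      using st \<open>u \<in> U\<close> bdd xy
      by (intro add_mono mult_left_mono cSUP_upper) auto
    finally show "\<phi> u (s *\<^sub>R x + t *\<^sub>R y) \<le> s * (SUP u\<in>U. \<phi> u x) + t * (SUP u\<in>U. \<phi> u y)" .
  qed
qed

lemma lowU_le_component:
  assumes "bounded U" "u \<in> U"
  shows "lowU U j \<le> u $ j"
  unfolding lowU_def
  using assms by (intro cINF_lower bounded_imp_bdd_below bounded_component_cart)

lemma component_le_upU:
  assumes "bounded U" "u \<in> U"
  shows "u $ j \<le> upU U j"
  unfolding upU_def
  using assms by (intro cSUP_upper bounded_imp_bdd_above bounded_component_cart)

lemma cplus_nonneg: "0 \<le> cplus U $ j"
  by (simp add: cplus_def)

lemma dplus_nonneg: "0 \<le> dplus U $ j"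
  by (simp add: dplus_def)

lemma add_cplus_nonneg:
  assumes "bounded U" "u \<in> U"
  shows "0 \<le> u $ j + cplus U $ j"
  using lowU_le_component[OF assms, of j] by (simp add: cplus_def)

lemma dplus_diff_nonneg:
  assumes "bounded U" "u \<in> U"
  shows "0 \<le> dplus U $ j - u $ j"
  using component_le_upU[OF assms, of j] by (simp add: dplus_def)

lemma convex_on_conjU_comp_diff:
  fixes A B :: "'a::real_vector \<Rightarrow> real^'m"
  assumes "bounded U" "U \<noteq> {}" and bdd: "\<And>t. bdd_above ((\<lambda>u. inner u t - f u) ` U)"
    and convex_A: "\<And>j. convex_on S (\<lambda>x. A x $ j)" and convex_B: "\<And>j. convex_on S (\<lambda>x. B x $ j)"
  shows "convex_on S
    (\<lambda>x. conjU f U (A x - B x) + (inner (cplus U) (A x) + inner (dplus U) (B x)))"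
proof -
  define \<phi> where "\<phi> u x = inner (u + cplus U) (A x) + inner (dplus U - u) (B x) - f u" for u x
  have \<phi>_eq: "\<phi> u x = inner (cplus U) (A x) + inner (dplus U) (B x) + (inner u (A x - B x) - f u)"
    for u x
    unfolding \<phi>_def by (simp add: inner_add_left inner_diff_left inner_diff_right)
  have "conjU f U (A x - B x) + (inner (cplus U) (A x) + inner (dplus U) (B x))
      = (SUP u\<in>U. \<phi> u x)" for x
    unfolding conjU_def \<phi>_eq Sup_add_eq[OF bdd \<open>U \<noteq> {}\<close>] by (rule add.commute)
  moreover have "convex_on S (\<lambda>x. SUP u\<in>U. \<phi> u x)"
  proof (rule convex_on_SUP[OF \<open>U \<noteq> {}\<close>])
    fix u assume "u \<in> U"
    have "0 \<le> (u + cplus U) $ j" "0 \<le> (dplus U - u) $ j" for j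
      using add_cplus_nonneg[OF \<open>bounded U\<close> \<open>u \<in> U\<close>] dplus_diff_nonneg[OF \<open>bounded U\<close> \<open>u \<in> U\<close>]
      by auto
    then show "convex_on S (\<phi> u)"
      unfolding \<phi>_def using convex_on_imp_convex[OF convex_A]
      by (intro convex_on_diff convex_on_add convex_on_inner_nonneg convex_A convex_B)
         (simp_all add: concave_on_const)
  next
    show "bdd_above ((\<lambda>u. \<phi> u x) ` U)" for x
      unfolding \<phi>_eq using bdd_above_image_mono[OF mono_add bdd] by (simp add: image_image)
  qed
  ultimately show ?thesis by simp
qed

theorem proposition3p4:
  fixes U :: "(real^'m) set" and f :: "real^'m \<Rightarrow> real"
    and n :: nat and X :: "nat \<Rightarrow> 'a::real_vector set"
    and E :: "(nat \<Rightarrow> 'a) \<Rightarrow> real^'m"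
    and a b :: "nat \<Rightarrow> 'm \<Rightarrow> 'a \<Rightarrow> (nat \<Rightarrow> 'a) \<Rightarrow> real"
  assumes "compact U"
    and max_attained: "\<And>t. \<exists>u\<in>U. \<forall>v\<in>U. inner v t - f v \<le> inner u t - f u"
    and decomp: "\<And>i j \<theta>. i < n \<Longrightarrow> \<theta> \<in> paramset n X \<Longrightarrow>
        E \<theta> $ j = a i j (\<theta> i) (\<theta>(i := 0)) - b i j (\<theta> i) (\<theta>(i := 0))"
    and conv_a: "\<And>i j \<theta>. i < n \<Longrightarrow> \<theta> \<in> paramset n X \<Longrightarrow>
        convex_on (X i) (\<lambda>x. a i j x (\<theta>(i := 0)))"
    and conv_b: "\<And>i j \<theta>. i < n \<Longrightarrow> \<theta> \<in> paramset n X \<Longrightarrow>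
        convex_on (X i) (\<lambda>x. b i j x (\<theta>(i := 0)))"
  shows "(\<forall>i<n. \<forall>\<theta>\<in>paramset n X.
            conjU f U (E \<theta>) = gfun f U E a b i (\<theta> i) (\<theta>(i := 0)) - hfun U a b i (\<theta> i) (\<theta>(i := 0))
          \<and> convex_on (X i) (\<lambda>x. gfun f U E a b i x (\<theta>(i := 0)))
          \<and> convex_on (X i) (\<lambda>x. hfun U a b i x (\<theta>(i := 0))))
       \<and> BDC n X (\<lambda>\<theta>. conjU f U (E \<theta>))"
proof -
  have "bounded U"
    using \<open>compact U\<close> compact_imp_bounded by blast
  have "U \<noteq> {}" and bdd: "bdd_above ((\<lambda>u. inner u t - f u) ` U)" for t
    using max_attained[of t] by (auto intro: bdd_aboveI2)
  have blockwise: "conjU f U (E \<theta>) = gfun f U E a b i (\<theta> i) (\<theta>(i := 0)) - hfun U a b i (\<theta> i) (\<theta>(i := 0))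
      \<and> convex_on (X i) (\<lambda>x. gfun f U E a b i x (\<theta>(i := 0)))
      \<and> convex_on (X i) (\<lambda>x. hfun U a b i x (\<theta>(i := 0)))"
    if "i < n" "\<theta> \<in> paramset n X" for i \<theta>
  proof -
    define A where "A x = (\<chi> j. a i j x (\<theta>(i := 0)))" for x
    define B where "B x = (\<chi> j. b i j x (\<theta>(i := 0)))" for x
    have convex_A: "convex_on (X i) (\<lambda>x. A x $ j)" and convex_B: "convex_on (X i) (\<lambda>x. B x $ j)" for j
      using conv_a[OF that] conv_b[OF that] by (simp_all add: A_def B_def)
    have "E (\<theta>(i := x)) = A x - B x" if "x \<in> X i" for x
      using decomp[OF \<open>i < n\<close>, of "\<theta>(i := x)"] \<open>\<theta> \<in> paramset n X\<close> that \<open>i < n\<close>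
      by (auto simp: vec_eq_iff A_def B_def paramset_def)
    then have "convex_on (X i) (\<lambda>x. gfun f U E a b i x (\<theta>(i := 0)))"
      using convex_on_conjU_comp_diff[OF \<open>bounded U\<close> \<open>U \<noteq> {}\<close> bdd convex_A convex_B]
      by (subst convex_on_cong[where g = "\<lambda>x. conjU f U (A x - B x) + hfun U a b i x (\<theta>(i := 0))"])
         (simp_all add: gfun_def hfun_def A_def B_def)
    moreover have "convex_on (X i) (\<lambda>x. hfun U a b i x (\<theta>(i := 0)))"
      unfolding hfun_def using convex_A convex_B
      by (intro convex_on_add convex_on_inner_nonneg cplus_nonneg dplus_nonneg) (simp_all add: A_def B_def)
    ultimately show ?thesis
      by (simp add: gfun_def)
  qed
  then show ?thesis
    unfolding BDC_def by blast
qed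

end
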